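(* Let $q^\star(\cdot\mid h)$ and $q_\theta(\cdot\mid h)$ be probability measures on $[0,B]$, and for $x\in[0,B]$ let $P^{\mathrm{obs}}_{h,x}$, $Q^{\mathrm{obs}}_{h,x}$ be their pushforwards under $d\mapsto(\min\{d,x\},\mathbf{1}\{d\le x\})$. Let $\eta\in(0,1]$ and let $\mu(\cdot\mid h)$ be any probability distribution on $[0,B]$ with $\mu(\{B\}\mid h)\ge\eta$. Then $$\mathrm{KL}(q^\star(\cdot\mid h)\|q_\theta(\cdot\mid h))\le\frac1\eta\,\mathbb{E}_{X\sim\mu(\cdot\mid h)}\big[\mathrm{KL}(P^{\mathrm{obs}}_{h,X}\|Q^{\mathrm{obs}}_{h,X})\big].$$
   Context: KL denotes Kullback–Leibler divergence. In the paper $q^\star,q_\theta$ are the true and learned conditional laws of the demand $D_t\in[0,B]$ given history $h$, and $\mu$ is the deployed action distribution. *)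

theory Defs
  imports "HOL-Probability.Probability"
begin

text \<open>Extended-valued KL divergence KL(P || Q) (natural logarithm), built on the
library's KL_divergence (note: KL_divergence b Q P is KL(P || Q)).\<close>
definition KL :: "'a measure \<Rightarrow> 'a measure \<Rightarrow> ennreal" where
  "KL P Q = (if sets P = sets Q \<and> absolutely_continuous Q P \<and>
                 integrable P (entropy_density (exp 1) Q P)
             then ennreal (KL_divergence (exp 1) Q P) else \<infinity>)"

definition obs_map :: "real \<Rightarrow> real \<Rightarrow> real \<times> bool" where
  "obs_map x d = (min d x, d \<le> x)"

definition obs_law :: "real measure \<Rightarrow> real \<Rightarrow> (real \<times> bool) measure" where
  "obs_law q x = distr q (borel \<Otimes>\<^sub>M count_space UNIV) (obs_map x)"

end

theory Submission
  imports Defs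
begin

text \<open>At the action \<open>x = B\<close> the demand, which lies in \<open>[0, B]\<close> almost surely, is never censored:
the observation is \<open>(d, True)\<close>, a measurable injective image of \<open>d\<close> with measurable inverse
\<open>fst\<close>, so it carries the full divergence \<open>KL(q\<^sup>\<star> \<parallel> q\<^sub>\<theta>)\<close>. Since all divergences are
nonnegative and \<open>\<mu>\<close> puts mass at least \<open>\<eta>\<close> on \<open>B\<close>, the expected observed divergence is at least
\<open>\<eta>\<close> times this value.\<close>

lemma absolutely_continuous_distr:
  assumes "absolutely_continuous Q P" "sets P = sets Q" "f \<in> measurable Q N"
  shows "absolutely_continuous (distr Q N f) (distr P N f)"
  unfolding absolutely_continuous_def
proof
  fix A assume A: "A \<in> null_sets (distr Q N f)"
  have fP: "f \<in> measurable P N" using assms(2,3) measurable_cong_sets by blast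
  have As: "A \<in> sets N" using A by auto
  have "f -` A \<inter> space Q \<in> null_sets Q"
    using A assms(3) As by (auto simp: null_sets_def emeasure_distr)
  then have "f -` A \<inter> space Q \<in> null_sets P"
    using assms(1) unfolding absolutely_continuous_def by blast
  moreover have "space P = space Q" using assms(2) sets_eq_imp_space_eq by blast
  ultimately show "A \<in> null_sets (distr P N f)"
    using As fP by (auto simp: null_sets_def emeasure_distr)
qed

lemma distr_distr_left_inverse:
  assumes "sets R = sets M" "T \<in> measurable M M'" "T' \<in> measurable M' M"
    and "\<And>x. x \<in> space M \<Longrightarrow> T' (T x) = x"
  shows "distr (distr R M' T) M T' = R"
proof -
  have TR: "T \<in> measurable R M'" using assms(1,2) measurable_cong_sets by blast
  have "distr (distr R M' T) M T' = distr R M (\<lambda>x. T' (T x))"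
    using distr_distr[OF assms(3) TR] by (simp add: comp_def)
  also have "\<dots> = distr R R (\<lambda>x. x)"
    using assms(1,4) sets_eq_imp_space_eq[OF assms(1)] by (intro distr_cong) auto
  finally show ?thesis by simp
qed

lemma AE_entropy_density_distr_left_inverse:
  assumes "prob_space Q" "sets P = sets M" "sets Q = sets M"
    and "T \<in> measurable M M'" "T' \<in> measurable M' M"
    and "\<And>x. x \<in> space M \<Longrightarrow> T' (T x) = x"
    and "absolutely_continuous (distr Q M' T) (distr P M' T)"
  shows "AE x in Q. entropy_density b (distr Q M' T) (distr P M' T) (T x)
                    = entropy_density b Q P x"
proof -
  interpret Q: prob_space Q by fact
  have TQ: "T \<in> measurable Q M'" using assms(3,4) measurable_cong_sets by blast
  have T'Q: "T' \<in> measurable M' Q" using assms(3,5) measurable_cong_sets[OF refl] by blast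
  have "AE x in Q. RN_deriv (distr Q M' T) (distr P M' T) (T x) = RN_deriv Q P x"
    using Q.RN_deriv_distr[OF TQ T'Q _ _] assms sets_eq_imp_space_eq[OF assms(3)] by auto
  then show ?thesis by (rule eventually_mono) (simp add: entropy_density_def)
qed

lemma KL_le_KL_distr_left_inverse:
  assumes Q: "prob_space Q" and sP: "sets P = sets M" and sQ: "sets Q = sets M"
    and T: "T \<in> measurable M M'" and T': "T' \<in> measurable M' M"
    and inv: "\<And>x. x \<in> space M \<Longrightarrow> T' (T x) = x"
  shows "KL P Q \<le> KL (distr P M' T) (distr Q M' T)"
proof (cases "absolutely_continuous (distr Q M' T) (distr P M' T) \<and>
     integrable (distr P M' T) (entropy_density (exp 1) (distr Q M' T) (distr P M' T))")
  case False
  then have "KL (distr P M' T) (distr Q M' T) = \<infinity>" by (simp add: KL_def)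
  then show ?thesis by simp
next
  case True
  let ?ed' = "entropy_density (exp 1) (distr Q M' T) (distr P M' T)"
  let ?ed = "entropy_density (exp 1) Q P"
  have sPQ: "sets P = sets Q" using sP sQ by simp
  have TP: "T \<in> measurable P M'" using T sP measurable_cong_sets by blast
  have acQP: "absolutely_continuous Q P"
  proof -
    have "absolutely_continuous (distr (distr Q M' T) M T') (distr (distr P M' T) M T')"
      using True T' by (simp add: absolutely_continuous_distr)
    then show ?thesis using distr_distr_left_inverse[OF _ T T' inv] sP sQ by simp
  qed
  have "AE x in Q. ?ed' (T x) = ?ed x"
    using AE_entropy_density_distr_left_inverse[OF Q sP sQ T T' inv] True by blast
  then have AE: "AE x in P. ?ed' (T x) = ?ed x"
    using absolutely_continuous_AE[OF sPQ acQP] by blast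
  have m': "?ed' \<in> borel_measurable M'"
    using measurable_entropy_density[of "exp 1" "distr Q M' T" "distr P M' T"] by simp
  have mT: "(\<lambda>x. ?ed' (T x)) \<in> borel_measurable P" using m' TP by measurable
  have m: "?ed \<in> borel_measurable P"
    using measurable_entropy_density[of "exp 1" Q P] measurable_cong_sets[OF sPQ refl] by blast
  have "integrable P ?ed"
    using True integrable_distr_eq[OF TP m'] integrable_cong_AE[OF mT m AE] by simp
  moreover have "KL_divergence (exp 1) (distr Q M' T) (distr P M' T) = KL_divergence (exp 1) Q P"
    unfolding KL_divergence_def using integral_distr[OF TP m'] integral_cong_AE[OF mT m AE] by simp
  ultimately show ?thesis using True acQP sPQ by (simp add: KL_def)
qed

lemma obs_law_upper_bound:
  assumes "prob_space q" "sets q = sets borel" "emeasure q {0..B} = 1"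
  shows "obs_law q B = distr q (borel \<Otimes>\<^sub>M count_space UNIV) (\<lambda>d. (d, True))"
proof -
  interpret prob_space q by fact
  have "AE d in q. d \<in> {0..B}"
    using assms(3) by (intro AE_prob_1) (simp add: emeasure_eq_measure)
  moreover have "obs_map B \<in> measurable q (borel \<Otimes>\<^sub>M count_space UNIV)"
    unfolding obs_map_def measurable_cong_sets[OF assms(2) refl] by measurable
  moreover have "(\<lambda>d. (d, True)) \<in> measurable q (borel \<Otimes>\<^sub>M count_space UNIV)"
    unfolding measurable_cong_sets[OF assms(2) refl] by measurable
  ultimately show ?thesis unfolding obs_law_def
    by (intro distr_cong_AE) (auto simp: obs_map_def elim!: AE_mp)
qed

lemma KL_le_KL_obs_law_upper_bound:
  assumes "prob_space q" "sets q = sets borel" "emeasure q {0..B} = 1"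
    and "prob_space q'" "sets q' = sets borel" "emeasure q' {0..B} = 1"
  shows "KL q q' \<le> KL (obs_law q B) (obs_law q' B)"
  unfolding obs_law_upper_bound[OF assms(1-3)] obs_law_upper_bound[OF assms(4-6)]
  by (rule KL_le_KL_distr_left_inverse[OF assms(4,2,5)]) auto

lemma le_nn_integral_point_mass:
  fixes f :: "'a \<Rightarrow> ennreal"
  assumes "{b} \<in> sets M" "0 < \<eta>" "ennreal \<eta> \<le> emeasure M {b}"
  shows "f b \<le> ennreal (1 / \<eta>) * (\<integral>\<^sup>+ x. f x \<partial>M)"
proof -
  have "ennreal \<eta> * f b \<le> emeasure M {b} * f b"
    using assms(3) by (intro mult_right_mono) auto
  also have "\<dots> = (\<integral>\<^sup>+ x. f b * indicator {b} x \<partial>M)"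
    using assms(1) by (simp add: nn_integral_cmult_indicator mult.commute)
  also have "\<dots> \<le> (\<integral>\<^sup>+ x. f x \<partial>M)"
    by (intro nn_integral_mono) (auto split: split_indicator)
  finally have "ennreal (1 / \<eta>) * (ennreal \<eta> * f b) \<le> ennreal (1 / \<eta>) * (\<integral>\<^sup>+ x. f x \<partial>M)"
    by (rule mult_left_mono) simp
  moreover have "ennreal (1 / \<eta>) * (ennreal \<eta> * f b) = f b"
    using assms(2) by (simp add: mult.assoc[symmetric] ennreal_mult[symmetric])
  ultimately show ?thesis by simp
qed

theorem lemmaC19:
  fixes B \<eta> :: real and qstar qtheta \<mu> :: "real measure"
  assumes "prob_space qstar" and "sets qstar = sets borel" and "emeasure qstar {0..B} = 1"
      and "prob_space qtheta" and "sets qtheta = sets borel" and "emeasure qtheta {0..B} = 1"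
      and "prob_space \<mu>" and "sets \<mu> = sets borel" and "emeasure \<mu> {0..B} = 1"
      and "0 < \<eta>" and "\<eta> \<le> 1"
      and "emeasure \<mu> {B} \<ge> ennreal \<eta>"
  shows "KL qstar qtheta
           \<le> ennreal (1 / \<eta>) * (\<integral>\<^sup>+ x. KL (obs_law qstar x) (obs_law qtheta x) \<partial>\<mu>)"
proof -
  have "KL qstar qtheta \<le> KL (obs_law qstar B) (obs_law qtheta B)"
    using assms(1-6) by (rule KL_le_KL_obs_law_upper_bound)
  also have "\<dots> \<le> ennreal (1 / \<eta>) * (\<integral>\<^sup>+ x. KL (obs_law qstar x) (obs_law qtheta x) \<partial>\<mu>)"
    using assms(8,10,12) by (intro le_nn_integral_point_mass) auto
  finally show ?thesis .
qed

end
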